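(* Let $\vec r:\mathbb{Z}\to\mathbb{R}^2$ be a nondegenerate convex hexagon with parallel and equi-length opposite sides (closed with period $6$, simple, convex, $\vec t_{k+3}=-\vec t_k$ for all $k$). Then the iterates $\mathcal{P}(\vec r)$, $\mathcal{P}(\mathcal{P}(\vec r))$, $\mathcal{Q}(\vec r)$, $\mathcal{Q}(\mathcal{Q}(\vec r))$ are well defined and are again nondegenerate convex hexagons with parallel and equi-length opposite sides, and $\vec r$ is periodically stable under both maps: there exist integers $s,s'$ such that for all $n$ the centroaffine curvatures satisfy $\kappa_n(\mathcal{P}(\mathcal{P}(\vec r)))=\kappa_{n+s}(\vec r)$, $\bar\kappa_n(\mathcal{P}(\mathcal{P}(\vec r)))=\bar\kappa_{n+s}(\vec r)$, and $\kappa_n(\mathcal{Q}(\mathcal{Q}(\vec r)))=\kappa_{n+s'}(\vec r)$, $\bar\kappa_n(\mathcal{Q}(\mathcal{Q}(\vec r)))=\bar\kappa_{n+s'}(\vec r)$.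
   Context: A discrete planar curve is a map $\vec r:\mathbb{Z}\to\mathbb{R}^2$; $\vec r_k=\vec r(k)$, $\vec t_k=\vec r_{k+1}-\vec r_k$, $[\vec a,\vec b]$ the $2\times2$ determinant. Nondegenerate: $[\vec t_{k-1},\vec t_k]\ne0$ for all $k$. First and second centroaffine curvatures: $\kappa_k=\frac{[\vec t_k,\vec t_{k+1}]}{[\vec t_{k-1},\vec t_k]}$, $\bar\kappa_k=\frac{[\vec t_{k-1},\vec t_{k+1}]}{[\vec t_{k-1},\vec t_k]}$. Closed with period $q$: $\vec r(k+q)=\vec r(k)$ for all $k$, $q$ minimal; simple: the piecewise-linear interpolation is injective on $[k,k+q)$; convex: for each line through $\vec r_k,\vec r_{k+1}$, all vertices lie in one closed half-plane bounded by it. The pentagram image is $\mathcal{P}(\vec r)_k=$ the intersection point of the line through $\vec r_{k-1},\vec r_{k+1}$ with the line through $\vec r_k,\vec r_{k+2}$; the inverse pentagram image is $\mathcal{Q}(\vec r)_k=$ the intersection point of the line through $\vec r_{k-1},\vec r_k$ with the line through $\vec r_{k+1},\vec r_{k+2}$. *)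

theory Defs
  imports "HOL-Analysis.Analysis"
begin

type_synonym dcurve = "int \<Rightarrow> real \<times> real"

definition det2 :: "real \<times> real \<Rightarrow> real \<times> real \<Rightarrow> real" where
  "det2 a b = fst a * snd b - snd a * fst b"

definition tang :: "dcurve \<Rightarrow> int \<Rightarrow> real \<times> real" where
  "tang r k = r (k + 1) - r k"

definition nondegenerate :: "dcurve \<Rightarrow> bool" where
  "nondegenerate r \<longleftrightarrow> (\<forall>k. det2 (tang r (k - 1)) (tang r k) \<noteq> 0)"

definition kappa :: "dcurve \<Rightarrow> int \<Rightarrow> real" where
  "kappa r k = det2 (tang r k) (tang r (k + 1)) / det2 (tang r (k - 1)) (tang r k)"

definition kappabar :: "dcurve \<Rightarrow> int \<Rightarrow> real" where
  "kappabar r k = det2 (tang r (k - 1)) (tang r (k + 1)) / det2 (tang r (k - 1)) (tang r k)"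

definition closed_period :: "dcurve \<Rightarrow> int \<Rightarrow> bool" where
  "closed_period r q \<longleftrightarrow> q > 0 \<and> (\<forall>k. r (k + q) = r k) \<and>
     (\<forall>p. 0 < p \<and> p < q \<longrightarrow> \<not> (\<forall>k. r (k + p) = r k))"

definition pl_interp :: "dcurve \<Rightarrow> real \<Rightarrow> real \<times> real" where
  "pl_interp r t = r \<lfloor>t\<rfloor> + (t - of_int \<lfloor>t\<rfloor>) *\<^sub>R (r (\<lfloor>t\<rfloor> + 1) - r \<lfloor>t\<rfloor>)"

definition simple_curve :: "dcurve \<Rightarrow> int \<Rightarrow> bool" where
  "simple_curve r q \<longleftrightarrow> (\<forall>k::int. inj_on (pl_interp r) {real_of_int k ..< real_of_int k + real_of_int q})"

definition convex_curve :: "dcurve \<Rightarrow> bool" where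
  "convex_curve r \<longleftrightarrow> (\<forall>k. (\<forall>j. det2 (tang r k) (r j - r k) \<ge> 0) \<or> (\<forall>j. det2 (tang r k) (r j - r k) \<le> 0))"

text \<open>Line through a and b (a proper line when a \<noteq> b).\<close>
definition line_through :: "real \<times> real \<Rightarrow> real \<times> real \<Rightarrow> (real \<times> real) set" where
  "line_through a b = {p. det2 (b - a) (p - a) = 0}"

definition isect_wd :: "real \<times> real \<Rightarrow> real \<times> real \<Rightarrow> real \<times> real \<Rightarrow> real \<times> real \<Rightarrow> bool" where
  "isect_wd a b c d \<longleftrightarrow> a \<noteq> b \<and> c \<noteq> d \<and> (\<exists>!p. p \<in> line_through a b \<and> p \<in> line_through c d)"

definition isect :: "real \<times> real \<Rightarrow> real \<times> real \<Rightarrow> real \<times> real \<Rightarrow> real \<times> real \<Rightarrow> real \<times> real" where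
  "isect a b c d = (THE p. p \<in> line_through a b \<and> p \<in> line_through c d)"

definition pent :: "dcurve \<Rightarrow> dcurve" where
  "pent r k = isect (r (k - 1)) (r (k + 1)) (r k) (r (k + 2))"

definition pent_wd :: "dcurve \<Rightarrow> bool" where
  "pent_wd r \<longleftrightarrow> (\<forall>k. isect_wd (r (k - 1)) (r (k + 1)) (r k) (r (k + 2)))"

definition invpent :: "dcurve \<Rightarrow> dcurve" where
  "invpent r k = isect (r (k - 1)) (r k) (r (k + 1)) (r (k + 2))"

definition invpent_wd :: "dcurve \<Rightarrow> bool" where
  "invpent_wd r \<longleftrightarrow> (\<forall>k. isect_wd (r (k - 1)) (r k) (r (k + 1)) (r (k + 2)))"

definition par_hexagon :: "dcurve \<Rightarrow> bool" where
  "par_hexagon r \<longleftrightarrow> nondegenerate r \<and> closed_period r 6 \<and> simple_curve r 6 \<and>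
     convex_curve r \<and> (\<forall>k. tang r (k + 3) = - tang r k)"

end

theory Submission
  imports Defs
begin

text \<open>For a hexagon with antipodal sides \<open>t (k + 3) = - t k\<close> the determinants
  \<open>D k = [t k, t (k + 1)]\<close> are 3-periodic, say with values \<open>x, y, z\<close>, and the hexagon is closed,
  simple and convex as soon as all \<open>D k\<close> have one sign. Both maps commute with the point
  reflection through the centre, so the images again have antipodal sides, and a direct
  computation of the intersection points gives
  \<open>D (P r) k = D k D (k + 1) / (x + y + z)\<close> and \<open>D (Q r) k = (x y + y z + z x) / D (k - 1)\<close>;
  in particular the sign of the \<open>D k\<close> is preserved. Applying either map twice therefore
  multiplies \<open>D\<close> by a nonzero constant and shifts the index by one, and the centroaffine
  curvatures, being ratios of the \<open>D k\<close>, are shifted by one.\<close>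

lemma det2_add_left: "det2 (a + b) c = det2 a c + det2 b c"
  and det2_add_right: "det2 c (a + b) = det2 c a + det2 c b"
  and det2_diff_left: "det2 (a - b) c = det2 a c - det2 b c"
  and det2_diff_right: "det2 c (a - b) = det2 c a - det2 c b"
  and det2_scaleR_left: "det2 (t *\<^sub>R a) c = t * det2 a c"
  and det2_scaleR_right: "det2 c (t *\<^sub>R a) = t * det2 c a"
  and det2_minus_left: "det2 (- a) c = - det2 a c"
  and det2_minus_right: "det2 c (- a) = - det2 c a"
  and det2_zero_left: "det2 0 c = 0"
  and det2_zero_right: "det2 c 0 = 0"
  and det2_self: "det2 a a = 0"
  by (simp_all add: det2_def algebra_simps)

lemmas det2_simps = det2_add_left det2_add_right det2_diff_left det2_diff_right
  det2_scaleR_left det2_scaleR_right det2_minus_left det2_minus_right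
  det2_zero_left det2_zero_right det2_self

lemma det2_commute: "det2 b a = - det2 a b"
  by (simp add: det2_def)

lemma det2_cramer: "det2 u w *\<^sub>R v = det2 v w *\<^sub>R u + det2 u v *\<^sub>R w"
  by (cases u; cases v; cases w) (simp add: det2_def algebra_simps)

lemma det2_eq_0_imp_zero:
  assumes "det2 u w \<noteq> 0" "det2 u v = 0" "det2 w v = 0"
  shows "v = 0"
  using det2_cramer[of u w v] assms by (simp add: det2_commute[of v w])

lemma isect_wd_and_eq:
  fixes p1 p2 p3 p4 :: "real \<times> real"
  assumes D: "det2 (p2 - p1) (p4 - p3) \<noteq> 0"
  defines "q \<equiv> p1 + (det2 (p3 - p1) (p4 - p3) / det2 (p2 - p1) (p4 - p3)) *\<^sub>R (p2 - p1)"
  shows "isect_wd p1 p2 p3 p4" and "isect p1 p2 p3 p4 = q"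
proof -
  define u w where "u = p2 - p1" and "w = p4 - p3"
  have q_p3: "q - p3 = (p1 - p3) + (det2 (p3 - p1) w / det2 u w) *\<^sub>R u"
    by (simp add: q_def u_def w_def)
  have "det2 w (q - p3) = det2 w (p1 - p3) - det2 (p3 - p1) w / det2 u w * det2 u w"
    unfolding q_p3 by (simp add: det2_add_right det2_scaleR_right det2_commute[of w u])
  also have "\<dots> = 0"
    using D by (simp add: u_def w_def) (simp add: det2_def algebra_simps)
  finally have "q \<in> line_through p3 p4"
    by (simp add: line_through_def w_def)
  moreover have "q \<in> line_through p1 p2"
    unfolding line_through_def q_def by (simp add: det2_scaleR_right det2_self)
  ultimately have on_lines: "q \<in> line_through p1 p2 \<and> q \<in> line_through p3 p4"
    by blast
  have unique: "x = q" if "x \<in> line_through p1 p2 \<and> x \<in> line_through p3 p4" for x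
  proof -
    have "det2 (p2 - p1) (x - q) = 0" "det2 (p4 - p3) (x - q) = 0"
      using that on_lines by (simp_all add: line_through_def det2_simps)
    then show "x = q" using det2_eq_0_imp_zero[OF D, of "x - q"] by simp
  qed
  have "\<exists>!x. x \<in> line_through p1 p2 \<and> x \<in> line_through p3 p4"
    using on_lines unique by blast
  moreover have "p1 \<noteq> p2" "p3 \<noteq> p4"
    using D by (auto simp: det2_simps)
  ultimately show "isect_wd p1 p2 p3 p4"
    by (simp add: isect_wd_def)
  show "isect p1 p2 p3 p4 = q"
    unfolding isect_def using on_lines unique by (rule the_equality)
qed

text \<open>Every hexagon with antipodal sides has the vertices \<open>p - a, p, p + b, p + b + c,
  p + b + c - a, p + c - a\<close>, where \<open>p\<close> is a vertex, \<open>a\<close> the side entering it and \<open>b, c\<close> the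
  next two sides.\<close>
lemma pent_hexagon_side_det2:
  fixes p a b c :: "real \<times> real"
  defines "x \<equiv> det2 a b" and "y \<equiv> det2 b c" and "z \<equiv> det2 a c"
  assumes S: "x + y + z \<noteq> 0"
  shows "det2 (isect p (p+b+c) (p+b) (p+b+c-a) - isect (p-a) (p+b) p (p+b+c))
               (isect (p+b) (p+b+c-a) (p+b+c) (p+c-a) - isect p (p+b+c) (p+b) (p+b+c-a))
         = y * z / (x + y + z)"
proof -
  have "det2 b a = - x" "det2 c a = - z" "det2 c b = - y"
    unfolding x_def y_def z_def by (simp_all add: det2_commute[of b a] det2_commute[of c a] det2_commute[of c b])
  note ds = det2_simps this x_def[symmetric] y_def[symmetric] z_def[symmetric]
  define s where "s = x + y + z"
  have P0: "isect (p-a) (p+b) p (p+b+c) = (p - a) + ((x+z)/s) *\<^sub>R (a + b)"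
    using isect_wd_and_eq(2)[of "p+b" "p-a" "p+b+c" p] S by (simp add: ds algebra_simps s_def)
  have P1: "isect p (p+b+c) (p+b) (p+b+c-a) = p + ((x+y)/s) *\<^sub>R (b + c)"
    using isect_wd_and_eq(2)[of "p+b+c" p "p+b+c-a" "p+b"] S by (simp add: ds algebra_simps s_def)
  have P2: "isect (p+b) (p+b+c-a) (p+b+c) (p+c-a) = (p + b) + ((y+z)/s) *\<^sub>R (c - a)"
    using isect_wd_and_eq(2)[of "p+b+c-a" "p+b" "p+c-a" "p+b+c"] S by (simp add: ds algebra_simps s_def)
  have "s \<noteq> 0"
    using S by (simp add: s_def)
  then have "det2 ((1 - (x+z)/s) *\<^sub>R a + ((x+y)/s - (x+z)/s) *\<^sub>R b + ((x+y)/s) *\<^sub>R c)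
      (- (((y+z)/s) *\<^sub>R a) + (1 - (x+y)/s) *\<^sub>R b + ((y+z)/s - (x+y)/s) *\<^sub>R c) = y * z / s"
    by (simp add: ds) (simp add: field_simps, simp add: s_def, algebra)
  then show ?thesis
    unfolding P0 P1 P2 s_def[symmetric] by (simp add: algebra_simps)
qed

lemma invpent_hexagon_side_det2:
  fixes p a b c :: "real \<times> real"
  defines "x \<equiv> det2 a b" and "y \<equiv> det2 b c" and "z \<equiv> det2 a c"
  assumes nz: "x \<noteq> 0" "y \<noteq> 0" "z \<noteq> 0"
  shows "det2 (isect p (p+b) (p+b+c) (p+b+c-a) - isect (p-a) p (p+b) (p+b+c))
               (isect (p+b) (p+b+c) (p+b+c-a) (p+c-a) - isect p (p+b) (p+b+c) (p+b+c-a))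
         = (x*y + y*z + z*x) / x"
proof -
  have "det2 b a = - x" "det2 c a = - z" "det2 c b = - y"
    unfolding x_def y_def z_def by (simp_all add: det2_commute[of b a] det2_commute[of c a] det2_commute[of c b])
  note ds = det2_simps this x_def[symmetric] y_def[symmetric] z_def[symmetric]
  have Q0: "isect (p-a) p (p+b) (p+b+c) = (p - a) + ((y+z)/z) *\<^sub>R a"
    using isect_wd_and_eq(2)[of p "p-a" "p+b+c" "p+b"] nz by (simp add: ds algebra_simps)
  have Q1: "isect p (p+b) (p+b+c) (p+b+c-a) = p + ((x+z)/x) *\<^sub>R b"
    using isect_wd_and_eq(2)[of "p+b" p "p+b+c-a" "p+b+c"] nz by (simp add: ds algebra_simps)
  have Q2: "isect (p+b) (p+b+c) (p+b+c-a) (p+c-a) = (p + b) + ((x+y)/y) *\<^sub>R c"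
    using isect_wd_and_eq(2)[of "p+b+c" "p+b" "p+c-a" "p+b+c-a"] nz by (simp add: ds algebra_simps)
  have "det2 ((1 - (y+z)/z) *\<^sub>R a + ((x+z)/x) *\<^sub>R b) ((1 - (x+z)/x) *\<^sub>R b + ((x+y)/y) *\<^sub>R c)
      = (x*y + y*z + z*x) / x"
    using nz by (simp add: ds) (simp add: field_simps)
  then show ?thesis
    unfolding Q0 Q1 Q2 by (simp add: algebra_simps)
qed

lemma int_shift_invariant:
  fixes f :: "int \<Rightarrow> 'a"
  assumes "\<And>k. f (k + 1) = f k"
  shows "f k = f 0"
proof (induct k rule: int_induct[where k = 0])
  case (step2 i)
  then show ?case using assms[of "i - 1"] by simp
qed (use assms in simp_all)

lemma periodic3_cyclic_invariant:
  fixes f :: "int \<Rightarrow> 'a"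
  assumes periodic: "\<And>k. f (k + 3) = f k" and cyclic: "\<And>x y z. F x y z = F y z x"
  shows "F (f (k - 1)) (f k) (f (k + 1)) = F (f 0) (f 1) (f 2)"
proof -
  let ?g = "\<lambda>k. F (f k) (f (k + 1)) (f (k + 2))"
  have "?g (k + 1) = ?g k" for k
    using cyclic[of "f k"] periodic[of k] by (simp add: add.assoc)
  then have "?g (k - 1) = ?g 0"
    by (rule int_shift_invariant)
  then show ?thesis by (simp add: add.commute)
qed

lemma same_sign_mult_pos: "0 < s * x \<Longrightarrow> 0 < s * y \<Longrightarrow> 0 < x * (y::real)"
  by (auto simp: zero_less_mult_iff)

lemma int_mod_small: "- n < (d::int) \<Longrightarrow> d < n \<Longrightarrow> d mod n = (if 0 \<le> d then d else d + n)"
  using mod_pos_pos_trivial[of d n] mod_pos_pos_trivial[of "d + n" n] by auto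

lemma curve_succ: "r (k + 1) = r k + tang r k"
  and curve_pred: "r (k - 1) = r k - tang r (k - 1)"
  by (simp_all add: tang_def)

lemma pl_interp_floor_frac: "pl_interp r t = r \<lfloor>t\<rfloor> + frac t *\<^sub>R tang r \<lfloor>t\<rfloor>"
  by (simp add: pl_interp_def tang_def frac_def)

definition tang_det :: "dcurve \<Rightarrow> int \<Rightarrow> real" where
  "tang_det r k = det2 (tang r k) (tang r (k + 1))"

lemma kappa_eq_tang_det: "kappa r k = tang_det r k / tang_det r (k - 1)"
  by (simp add: kappa_def tang_det_def)

definition oriented_par_hexagon :: "dcurve \<Rightarrow> real \<Rightarrow> bool" where
  "oriented_par_hexagon r \<sigma> \<longleftrightarrow> (\<forall>k. tang r (k + 3) = - tang r k) \<and> (\<forall>k. 0 < \<sigma> * tang_det r k)"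

definition tang_det_sum :: "dcurve \<Rightarrow> real" where
  "tang_det_sum r = tang_det r 0 + tang_det r 1 + tang_det r 2"

definition tang_det_pair_sum :: "dcurve \<Rightarrow> real" where
  "tang_det_pair_sum r = tang_det r 0 * tang_det r 1 + tang_det r 1 * tang_det r 2 + tang_det r 2 * tang_det r 0"

definition tang_det_prod :: "dcurve \<Rightarrow> real" where
  "tang_det_prod r = tang_det r 0 * tang_det r 1 * tang_det r 2"

lemma tang_det_vertices: "tang_det r k = det2 (r (k + 1) - r k) (r (k + 2) - r (k + 1))"
  by (simp add: tang_det_def tang_def add.assoc)

lemma isect_point_reflection:
  assumes "det2 (p2 - p1) (p4 - p3) \<noteq> 0"
  shows "isect (c - p1) (c - p2) (c - p3) (c - p4) = c - isect p1 p2 p3 p4"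
proof -
  have "det2 ((c - p2) - (c - p1)) ((c - p4) - (c - p3)) = det2 (p2 - p1) (p4 - p3)"
    "det2 ((c - p3) - (c - p1)) ((c - p4) - (c - p3)) = det2 (p3 - p1) (p4 - p3)"
    by (simp_all add: det2_def algebra_simps)
  then show ?thesis
    using assms by (simp add: isect_wd_and_eq(2) algebra_simps)
qed

context
  fixes r :: dcurve and \<sigma> :: real
  assumes hex: "oriented_par_hexagon r \<sigma>"
begin

lemma tang_antipodal: "tang r (k + 3) = - tang r k"
  using hex by (simp add: oriented_par_hexagon_def)

lemma tang_det_sign: "0 < \<sigma> * tang_det r k"
  using hex by (simp add: oriented_par_hexagon_def)

lemma tang_det_nonzero: "tang_det r k \<noteq> 0"
  using tang_det_sign[of k] by auto

lemma tang_nonzero: "tang r k \<noteq> 0"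
  using tang_det_nonzero[of k] by (auto simp: tang_det_def det2_simps)

lemma tang_det_periodic: "tang_det r (k + 3) = tang_det r k"
  using tang_antipodal[of k] tang_antipodal[of "k + 1"]
  by (simp add: tang_det_def add.assoc det2_simps)

lemma det2_tang_skip: "det2 (tang r (k - 1)) (tang r (k + 1)) = tang_det r (k + 1)"
  using tang_antipodal[of "k - 1"]
  by (simp add: tang_det_def det2_simps det2_commute[of "tang r (k - 1)"] algebra_simps)

lemma kappabar_eq_tang_det: "kappabar r k = tang_det r (k + 1) / tang_det r (k - 1)"
  using det2_tang_skip[of k] by (simp add: kappabar_def tang_det_def)

lemma vertex_offsets:
  "r (k - 1) = r k - tang r (k - 1)"
  "r (k + 1) = r k + tang r k"
  "r (k + 2) = r k + tang r k + tang r (k + 1)"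
  "r (k + 3) = r k + tang r k + tang r (k + 1) - tang r (k - 1)"
  "r (k + 4) = r k + tang r (k + 1) - tang r (k - 1)"
  "r (k + 5) = r k - tang r (k - 1)"
proof -
  have ap: "tang r (k + 2) = - tang r (k - 1)" "tang r (k + 3) = - tang r k"
    "tang r (k + 4) = - tang r (k + 1)"
    using tang_antipodal[of "k - 1"] tang_antipodal[of k] tang_antipodal[of "k + 1"]
    by (simp_all add: algebra_simps)
  show "r (k - 1) = r k - tang r (k - 1)" "r (k + 1) = r k + tang r k"
    by (rule curve_pred, rule curve_succ)
  show r2: "r (k + 2) = r k + tang r k + tang r (k + 1)"
    using curve_succ[of r k] curve_succ[of r "k + 1"] by (simp add: add.assoc)
  show r3: "r (k + 3) = r k + tang r k + tang r (k + 1) - tang r (k - 1)"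
    using r2 curve_succ[of r "k + 2"] ap by (simp add: add.assoc)
  show r4: "r (k + 4) = r k + tang r (k + 1) - tang r (k - 1)"
    using r3 curve_succ[of r "k + 3"] ap by (simp add: add.assoc)
  show "r (k + 5) = r k - tang r (k - 1)"
    using r4 curve_succ[of r "k + 4"] ap by (simp add: add.assoc)
qed

lemma central_symmetry: "r (k + 3) = (r 0 + r 3) - r k"
proof -
  have "r (k + 1) + r (k + 1 + 3) = r k + r (k + 3)" for k
    using curve_succ[of r k] curve_succ[of r "k + 3"] tang_antipodal[of k]
    by (simp add: algebra_simps)
  then have "r k + r (k + 3) = r 0 + r (0 + 3)"
    by (rule int_shift_invariant)
  then show ?thesis by (simp add: algebra_simps)
qed

lemma curve_periodic: "r (k + 6 * q) = r k"
proof -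
  have "r (k + 6) = r k" for k
    using central_symmetry[of k] central_symmetry[of "k + 3"] by (simp add: add.assoc)
  then have "r (k + 6 * (q + 1)) = r (k + 6 * q)" for q
    by (metis add.assoc distrib_left mult.right_neutral)
  then show ?thesis
    using int_shift_invariant[of "\<lambda>q. r (k + 6 * q)" q] by simp
qed

lemma side_det_pos:
  assumes "2 \<le> m" "m \<le> 5"
  shows "0 < \<sigma> * det2 (tang r k) (r (k + m) - r k)"
proof -
  have "m = 2 \<or> m = 3 \<or> m = 4 \<or> m = 5"
    using assms by arith
  moreover have "0 < \<sigma> * det2 (tang r k) (tang r (k + 1))"
    "0 < \<sigma> * det2 (tang r (k - 1)) (tang r k)"
    using tang_det_sign[of k] tang_det_sign[of "k - 1"] by (simp_all add: tang_det_def)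
  ultimately show ?thesis
    by (auto simp: vertex_offsets det2_simps det2_commute[of "tang r k" "tang r (k - 1)"] distrib_left)
qed

lemma side_det_mod: "det2 (tang r k) (r j - r k) = det2 (tang r k) (r (k + (j - k) mod 6) - r k)"
  using curve_periodic[of "k + (j - k) mod 6" "(j - k) div 6"] by simp

lemma side_det_nonneg: "0 \<le> \<sigma> * det2 (tang r k) (r j - r k)"
  and side_det_eq_0_iff: "det2 (tang r k) (r j - r k) = 0 \<longleftrightarrow> (j - k) mod 6 \<in> {0, 1}"
proof -
  define m where "m = (j - k) mod 6"
  have "m \<in> {0, 1} \<or> 2 \<le> m \<and> m \<le> 5"
    unfolding m_def by auto
  moreover have "det2 (tang r k) (r (k + m) - r k) = 0" if "m \<in> {0, 1}"
    using that curve_succ[of r k] by (auto simp: det2_simps)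
  ultimately show "0 \<le> \<sigma> * det2 (tang r k) (r j - r k)"
    "det2 (tang r k) (r j - r k) = 0 \<longleftrightarrow> (j - k) mod 6 \<in> {0, 1}"
    using side_det_pos[of m k] side_det_mod[of k j] unfolding m_def[symmetric] by fastforce+
qed

lemma side_line_meets_edge:
  assumes "0 \<le> \<beta>" "\<beta> < 1" and on_line: "det2 (tang r i) (r j + \<beta> *\<^sub>R tang r j - r i) = 0"
  shows "(j - i) mod 6 \<in> {0, 1}"
proof -
  let ?F = "\<lambda>j. \<sigma> * det2 (tang r i) (r j - r i)"
  have convex_comb: "r j + \<beta> *\<^sub>R tang r j - r i = (1 - \<beta>) *\<^sub>R (r j - r i) + \<beta> *\<^sub>R (r (j + 1) - r i)"
    by (simp add: tang_def algebra_simps)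
  have "\<sigma> * det2 (tang r i) (r j + \<beta> *\<^sub>R tang r j - r i) = (1 - \<beta>) * ?F j + \<beta> * ?F (j + 1)"
    unfolding convex_comb det2_add_right det2_scaleR_right by (simp add: algebra_simps)
  then have "(1 - \<beta>) * ?F j + \<beta> * ?F (j + 1) = 0"
    using on_line by simp
  moreover have "0 \<le> (1 - \<beta>) * ?F j" "0 \<le> \<beta> * ?F (j + 1)"
    using assms(1,2) side_det_nonneg by simp_all
  ultimately have "(1 - \<beta>) * ?F j = 0"
    by linarith
  then have "det2 (tang r i) (r j - r i) = 0"
    using assms(2) tang_det_nonzero[of 0] tang_det_sign[of 0] by auto
  then show ?thesis
    by (simp add: side_det_eq_0_iff)
qed

lemma simple_curve6: "simple_curve r 6"
  unfolding simple_curve_def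
proof (intro allI inj_onI)
  fix k0 :: int and s t :: real
  assume s: "s \<in> {real_of_int k0..<real_of_int k0 + real_of_int 6}"
    and t: "t \<in> {real_of_int k0..<real_of_int k0 + real_of_int 6}"
    and eq: "pl_interp r s = pl_interp r t"
  define i j where "i = \<lfloor>s\<rfloor>" and "j = \<lfloor>t\<rfloor>"
  have range: "k0 \<le> i" "i < k0 + 6" "k0 \<le> j" "j < k0 + 6"
    using s t by (auto simp: i_def j_def le_floor_iff floor_less_iff)
  have pl: "pl_interp r s = r i + frac s *\<^sub>R tang r i" "pl_interp r t = r j + frac t *\<^sub>R tang r j"
    by (simp_all add: i_def j_def pl_interp_floor_frac)
  have "det2 (tang r i) (r j + frac t *\<^sub>R tang r j - r i) = 0"
    using eq pl by (metis add_diff_cancel_left' det2_scaleR_right det2_self mult_zero_right)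
  moreover have "det2 (tang r j) (r i + frac s *\<^sub>R tang r i - r j) = 0"
    using eq pl by (metis add_diff_cancel_left' det2_scaleR_right det2_self mult_zero_right)
  ultimately have "(j - i) mod 6 \<in> {0, 1}" "(i - j) mod 6 \<in> {0, 1}"
    using side_line_meets_edge frac_ge_0 frac_lt_1 by blast+
  then have "i = j"
    using range int_mod_small[of 6 "j - i"] int_mod_small[of 6 "i - j"] by (simp split: if_splits)
  then have "frac s *\<^sub>R tang r i = frac t *\<^sub>R tang r i"
    using eq pl by simp
  then have "frac s = frac t"
    using tang_nonzero by simp
  then show "s = t"
    using \<open>i = j\<close> by (simp add: i_def j_def frac_def)
qed

lemma closed_period6: "closed_period r 6"
  unfolding closed_period_def
proof (intro conjI allI impI notI)
  show "r (k + 6) = r k" for k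
    using curve_periodic[of k 1] by simp
next
  fix p :: int
  assume p: "0 < p \<and> p < 6" and "\<forall>k. r (k + p) = r k"
  then have "r p = r 0" "r 1 = r (1 + p)"
    by (metis add_0, metis)
  then have "p = 1"
    using p side_det_eq_0_iff[of 0 p] by (simp add: det2_simps)
  then have "tang r 0 = 0"
    using \<open>r p = r 0\<close> by (simp add: tang_def)
  then show False
    using tang_nonzero by blast
qed simp

lemma oriented_par_hexagon_imp_par_hexagon: "par_hexagon r"
proof -
  have "nondegenerate r"
    using tang_det_nonzero unfolding nondegenerate_def tang_det_def by (metis diff_add_cancel)
  moreover have "convex_curve r"
  proof (cases "0 < \<sigma>")
    case True
    then show ?thesis
      using side_det_nonneg by (simp add: convex_curve_def zero_le_mult_iff)
  next
    case False
    moreover have "\<sigma> \<noteq> 0"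
      using tang_det_sign[of 0] by auto
    ultimately have "\<sigma> < 0"
      by linarith
    then show ?thesis
      using side_det_nonneg by (simp add: convex_curve_def zero_le_mult_iff)
  qed
  ultimately show ?thesis
    unfolding par_hexagon_def using closed_period6 simple_curve6 tang_antipodal by blast
qed

lemma tang_det_sum_eq: "tang_det r (k - 1) + tang_det r k + tang_det r (k + 1) = tang_det_sum r"
  using periodic3_cyclic_invariant[of "tang_det r" "\<lambda>x y z. x + y + z" k, OF tang_det_periodic]
  by (simp add: tang_det_sum_def add_ac)

lemma tang_det_pair_sum_eq:
  "tang_det r (k - 1) * tang_det r k + tang_det r k * tang_det r (k + 1) + tang_det r (k + 1) * tang_det r (k - 1)
     = tang_det_pair_sum r"
  using periodic3_cyclic_invariant[of "tang_det r" "\<lambda>x y z. x * y + y * z + z * x" k, OF tang_det_periodic]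
  by (simp add: tang_det_pair_sum_def add_ac mult_ac)

lemma tang_det_prod_eq: "tang_det r k * tang_det r (k + 1) * tang_det r (k + 2) = tang_det_prod r"
  using periodic3_cyclic_invariant[of "tang_det r" "\<lambda>x y z. x * y * z" "k + 1", OF tang_det_periodic]
  by (simp add: tang_det_prod_def mult_ac add.assoc)

lemma tang_det_sum_sign: "0 < \<sigma> * tang_det_sum r"
  using tang_det_sign[of 0] tang_det_sign[of 1] tang_det_sign[of 2]
  by (simp add: tang_det_sum_def distrib_left)

lemma tang_det_sum_nonzero: "tang_det_sum r \<noteq> 0"
  using tang_det_sum_sign by auto

lemma tang_det_pair_sum_pos: "0 < tang_det_pair_sum r"
  using same_sign_mult_pos[OF tang_det_sign tang_det_sign]
  by (simp add: tang_det_pair_sum_def add_pos_pos)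

lemma pent_diagonals_det2: "det2 (r (k + 1) - r (k - 1)) (r (k + 2) - r k) = tang_det_sum r"
  using tang_det_sum_eq[of k] by (simp add: vertex_offsets det2_simps tang_det_def det2_tang_skip)

lemma invpent_diagonals_det2: "det2 (r k - r (k - 1)) (r (k + 2) - r (k + 1)) = tang_det r (k + 1)"
  by (simp add: vertex_offsets det2_tang_skip)

lemma pent_wd_hexagon: "pent_wd r"
  unfolding pent_wd_def
  using isect_wd_and_eq(1) pent_diagonals_det2 tang_det_sum_nonzero by metis

lemma invpent_wd_hexagon: "invpent_wd r"
  unfolding invpent_wd_def using isect_wd_and_eq(1) invpent_diagonals_det2 tang_det_nonzero by metis

lemma tang_det_pent: "tang_det (pent r) k = tang_det r k * tang_det r (k + 1) / tang_det_sum r"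
proof -
  define p a b c where "p = r k" and "a = tang r (k - 1)" and "b = tang r k" and "c = tang r (k + 1)"
  note vertices = vertex_offsets[of k, folded p_def a_def b_def c_def]
  have dets: "det2 a b = tang_det r (k - 1)" "det2 b c = tang_det r k" "det2 a c = tang_det r (k + 1)"
    by (simp_all add: a_def b_def c_def tang_det_def det2_tang_skip)
  have "pent r k = isect (r (k - 1)) (r (k + 1)) (r k) (r (k + 2))"
    "pent r (k + 1) = isect (r k) (r (k + 2)) (r (k + 1)) (r (k + 3))"
    "pent r (k + 2) = isect (r (k + 1)) (r (k + 3)) (r (k + 2)) (r (k + 4))"
    unfolding pent_def by (simp_all add: algebra_simps)
  then have "tang_det (pent r) k =
      det2 (isect p (p + b + c) (p + b) (p + b + c - a) - isect (p - a) (p + b) p (p + b + c))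
        (isect (p + b) (p + b + c - a) (p + b + c) (p + c - a) - isect p (p + b + c) (p + b) (p + b + c - a))"
    by (simp add: tang_det_vertices vertices p_def)
  also have "\<dots> = tang_det r k * tang_det r (k + 1) / tang_det_sum r"
    using pent_hexagon_side_det2[of a b c p] tang_det_sum_eq[of k] tang_det_sum_nonzero
    by (simp add: dets)
  finally show ?thesis .
qed

lemma tang_det_invpent: "tang_det (invpent r) k = tang_det_pair_sum r / tang_det r (k - 1)"
proof -
  define p a b c where "p = r k" and "a = tang r (k - 1)" and "b = tang r k" and "c = tang r (k + 1)"
  note vertices = vertex_offsets[of k, folded p_def a_def b_def c_def]
  have dets: "det2 a b = tang_det r (k - 1)" "det2 b c = tang_det r k" "det2 a c = tang_det r (k + 1)"
    by (simp_all add: a_def b_def c_def tang_det_def det2_tang_skip)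
  have "invpent r k = isect (r (k - 1)) (r k) (r (k + 1)) (r (k + 2))"
    "invpent r (k + 1) = isect (r k) (r (k + 1)) (r (k + 2)) (r (k + 3))"
    "invpent r (k + 2) = isect (r (k + 1)) (r (k + 2)) (r (k + 3)) (r (k + 4))"
    unfolding invpent_def by (simp_all add: algebra_simps)
  then have "tang_det (invpent r) k =
      det2 (isect p (p + b) (p + b + c) (p + b + c - a) - isect (p - a) p (p + b) (p + b + c))
        (isect (p + b) (p + b + c) (p + b + c - a) (p + c - a) - isect p (p + b) (p + b + c) (p + b + c - a))"
    by (simp add: tang_det_vertices vertices p_def)
  also have "\<dots> = tang_det_pair_sum r / tang_det r (k - 1)"
    using invpent_hexagon_side_det2[of a b c p] tang_det_pair_sum_eq[of k]
      tang_det_nonzero[of "k - 1"] tang_det_nonzero[of k] tang_det_nonzero[of "k + 1"]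
    by (simp add: dets)
  finally show ?thesis .
qed

lemma pent_point_reflection: "pent r (k + 3) = (r 0 + r 3) - pent r k"
proof -
  have "pent r (k + 3) = isect (r (k - 1 + 3)) (r (k + 1 + 3)) (r (k + 3)) (r (k + 2 + 3))"
    unfolding pent_def by (simp add: algebra_simps)
  also have "\<dots> = (r 0 + r 3) - pent r k"
    unfolding central_symmetry pent_def using pent_diagonals_det2 tang_det_sum_nonzero
    by (intro isect_point_reflection) metis
  finally show ?thesis .
qed

lemma invpent_point_reflection: "invpent r (k + 3) = (r 0 + r 3) - invpent r k"
proof -
  have "invpent r (k + 3) = isect (r (k - 1 + 3)) (r (k + 3)) (r (k + 1 + 3)) (r (k + 2 + 3))"
    unfolding invpent_def by (simp add: algebra_simps)
  also have "\<dots> = (r 0 + r 3) - invpent r k"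
    unfolding central_symmetry invpent_def using invpent_diagonals_det2 tang_det_nonzero
    by (intro isect_point_reflection) metis
  finally show ?thesis .
qed

lemma oriented_par_hexagon_pent: "oriented_par_hexagon (pent r) \<sigma>"
  unfolding oriented_par_hexagon_def
proof (intro conjI allI)
  show "tang (pent r) (k + 3) = - tang (pent r) k" for k
    using pent_point_reflection[of k] pent_point_reflection[of "k + 1"]
    by (simp add: tang_def algebra_simps)
  fix k
  have "\<sigma> \<noteq> 0"
    using tang_det_sign[of 0] by auto
  then have "\<sigma> * tang_det (pent r) k
      = (\<sigma> * tang_det r k) * (\<sigma> * tang_det r (k + 1)) / (\<sigma> * tang_det_sum r)"
    by (simp add: tang_det_pent)
  then show "0 < \<sigma> * tang_det (pent r) k"
    using tang_det_sign[of k] tang_det_sign[of "k + 1"] tang_det_sum_sign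
    by (metis divide_pos_pos mult_pos_pos)
qed

lemma oriented_par_hexagon_invpent: "oriented_par_hexagon (invpent r) \<sigma>"
  unfolding oriented_par_hexagon_def
proof (intro conjI allI)
  show "tang (invpent r) (k + 3) = - tang (invpent r) k" for k
    using invpent_point_reflection[of k] invpent_point_reflection[of "k + 1"]
    by (simp add: tang_def algebra_simps)
  fix k
  have "\<sigma> * tang_det (invpent r) k
      = tang_det_pair_sum r * (\<sigma> * tang_det r (k - 1)) / (tang_det r (k - 1))\<^sup>2"
    using tang_det_nonzero[of "k - 1"] by (simp add: tang_det_invpent power2_eq_square)
  then show "0 < \<sigma> * tang_det (invpent r) k"
    using tang_det_sign[of "k - 1"] tang_det_pair_sum_pos tang_det_nonzero[of "k - 1"] by simp
qed

end

lemma par_hexagon_imp_oriented: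
  assumes "par_hexagon r"
  shows "oriented_par_hexagon r (tang_det r 0)"
proof -
  have tang_det_nonzero: "tang_det r k \<noteq> 0" for k
    using assms unfolding par_hexagon_def nondegenerate_def tang_det_def by (metis add_diff_cancel_right')
  have same_sign: "0 < tang_det r k * tang_det r (k + 1)" for k
  proof -
    have "det2 (tang r (k + 1)) (r (k + 3) - r (k + 1)) = tang_det r (k + 1)"
      using curve_succ[of r "k + 1"] curve_succ[of r "k + 2"]
      by (simp add: tang_det_def det2_simps add.assoc)
    moreover have "det2 (tang r (k + 1)) (r k - r (k + 1)) = tang_det r k"
      using curve_succ[of r k] by (simp add: tang_det_def det2_simps det2_commute[of "tang r (k + 1)"])
    moreover have "(\<forall>j. det2 (tang r (k + 1)) (r j - r (k + 1)) \<ge> 0) \<or> (\<forall>j. det2 (tang r (k + 1)) (r j - r (k + 1)) \<le> 0)"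
      using assms unfolding par_hexagon_def convex_curve_def by blast
    ultimately have "0 \<le> tang_det r k * tang_det r (k + 1)"
      by (metis mult_nonneg_nonneg mult_nonpos_nonpos)
    then show ?thesis
      using tang_det_nonzero[of k] tang_det_nonzero[of "k + 1"] by (simp add: order_le_less)
  qed
  have "(0 < tang_det r (k + 1)) = (0 < tang_det r k)" for k
    using same_sign[of k] by (auto simp: zero_less_mult_iff)
  then have sign_eq: "(0 < tang_det r k) = (0 < tang_det r 0)" for k
    by (rule int_shift_invariant)
  have "0 < tang_det r 0 * tang_det r k" for k
    using sign_eq[of k] tang_det_nonzero[of 0] tang_det_nonzero[of k] by (auto simp: zero_less_mult_iff)
  then show ?thesis
    using assms by (simp add: oriented_par_hexagon_def par_hexagon_def)
qed

lemma curvatures_shift: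
  assumes "oriented_par_hexagon r \<sigma>" "oriented_par_hexagon r' \<sigma>'"
    and "\<mu> \<noteq> 0" and "\<And>n. tang_det r' n = \<mu> * tang_det r (n + 1)"
  shows "kappa r' n = kappa r (n + 1) \<and> kappabar r' n = kappabar r (n + 1)"
  using assms(3) assms(4)[of n] assms(4)[of "n - 1"] assms(4)[of "n + 1"]
  by (simp add: kappa_eq_tang_det kappabar_eq_tang_det[OF assms(1)] kappabar_eq_tang_det[OF assms(2)] add.assoc)

lemma tang_det_pent_pent:
  assumes hex: "oriented_par_hexagon r \<sigma>"
  obtains \<mu> where "\<mu> \<noteq> 0" "\<And>n. tang_det (pent (pent r)) n = \<mu> * tang_det r (n + 1)"
proof
  let ?\<mu> = "tang_det_prod r / ((tang_det_sum r)\<^sup>2 * tang_det_sum (pent r))"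
  show "?\<mu> \<noteq> 0"
    using tang_det_nonzero[OF hex] tang_det_sum_nonzero[OF hex]
      tang_det_sum_nonzero[OF oriented_par_hexagon_pent[OF hex]]
    by (simp add: tang_det_prod_def)
  show "tang_det (pent (pent r)) n = ?\<mu> * tang_det r (n + 1)" for n
    using tang_det_prod_eq[OF hex, of n]
    by (simp add: tang_det_pent[OF oriented_par_hexagon_pent[OF hex]] tang_det_pent[OF hex]
        add.assoc power2_eq_square field_simps)
qed

lemma tang_det_invpent_invpent:
  assumes hex: "oriented_par_hexagon r \<sigma>"
  obtains \<mu> where "\<mu> \<noteq> 0" "\<And>n. tang_det (invpent (invpent r)) n = \<mu> * tang_det r (n + 1)"
proof
  let ?\<mu> = "tang_det_pair_sum (invpent r) / tang_det_pair_sum r"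
  show "?\<mu> \<noteq> 0"
    using tang_det_pair_sum_pos[OF hex] tang_det_pair_sum_pos[OF oriented_par_hexagon_invpent[OF hex]]
    by simp
  show "tang_det (invpent (invpent r)) n = ?\<mu> * tang_det r (n + 1)" for n
  proof -
    have "tang_det r (n - 1 - 1) = tang_det r (n + 1)"
      using tang_det_periodic[OF hex, of "n - 2"] by (simp add: algebra_simps)
    then show ?thesis
      using tang_det_pair_sum_pos[OF hex]
      by (simp add: tang_det_invpent[OF oriented_par_hexagon_invpent[OF hex]] tang_det_invpent[OF hex])
  qed
qed

theorem proposition7p12:
  fixes r :: dcurve
  assumes "par_hexagon r"
  shows "pent_wd r \<and> pent_wd (pent r) \<and> par_hexagon (pent r) \<and> par_hexagon (pent (pent r)) \<and>
         invpent_wd r \<and> invpent_wd (invpent r) \<and> par_hexagon (invpent r) \<and> par_hexagon (invpent (invpent r)) \<and>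
         (\<exists>s::int. \<forall>n. kappa (pent (pent r)) n = kappa r (n + s) \<and> kappabar (pent (pent r)) n = kappabar r (n + s)) \<and>
         (\<exists>s'::int. \<forall>n. kappa (invpent (invpent r)) n = kappa r (n + s') \<and> kappabar (invpent (invpent r)) n = kappabar r (n + s'))"
proof -
  define \<sigma> where "\<sigma> = tang_det r 0"
  have hex: "oriented_par_hexagon r \<sigma>"
    unfolding \<sigma>_def using assms by (rule par_hexagon_imp_oriented)
  have P: "oriented_par_hexagon (pent r) \<sigma>" "oriented_par_hexagon (pent (pent r)) \<sigma>"
    using hex oriented_par_hexagon_pent by blast+
  have Q: "oriented_par_hexagon (invpent r) \<sigma>" "oriented_par_hexagon (invpent (invpent r)) \<sigma>"
    using hex oriented_par_hexagon_invpent by blast+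
  obtain \<mu> where "\<mu> \<noteq> 0" "\<And>n. tang_det (pent (pent r)) n = \<mu> * tang_det r (n + 1)"
    using tang_det_pent_pent[OF hex] by blast
  then have "\<forall>n. kappa (pent (pent r)) n = kappa r (n + 1) \<and> kappabar (pent (pent r)) n = kappabar r (n + 1)"
    using curvatures_shift[OF hex P(2)] by blast
  moreover obtain \<nu> where "\<nu> \<noteq> 0" "\<And>n. tang_det (invpent (invpent r)) n = \<nu> * tang_det r (n + 1)"
    using tang_det_invpent_invpent[OF hex] by blast
  then have "\<forall>n. kappa (invpent (invpent r)) n = kappa r (n + 1) \<and> kappabar (invpent (invpent r)) n = kappabar r (n + 1)"
    using curvatures_shift[OF hex Q(2)] by blast
  ultimately show ?thesis
    using hex P Q pent_wd_hexagon invpent_wd_hexagon oriented_par_hexagon_imp_par_hexagon by blast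
qed

end
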